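(* Let $S_n$ ($n\ge3$) act on $V=\mathbb{C}^n$ by permutations, fix $a,b,c\in\mathbb{C}$, let $*\in\{L,C\}$, and let $x,y$ be $3$-cycles with $xy=g$. Let $\phi^*_{x,y}$ be the corresponding summand of the $g$-component of $\phi(\kappa^*_{\mathrm{tri}},\kappa^L_{\mathrm{tri}})$. For $1\leq i,j,k\leq n$: (1) if $e_i,e_j\in V^y$, then $\phi^*_{x,y}(e_i,e_j,e_k)=0$; (2) if $e_i\in V^y\cap V^x$, then $\phi^*_{x,y}(e_i,e_j,e_k)=0$; (3) if $e_i\in V^y\setminus V^x$ and $e_j\notin V^y$, then $\phi^*_{x,y}(e_i,e_j,ye_j)=2(b-a)\big[\delta_y(xe_i)-\delta_y(x^{-1}e_i)\big]\kappa^*_x(e_i,xe_i)$; (4) if $e_i\notin V^y$, then $\phi^*_{x,y}(e_i,ye_i,y^2e_i)=0$.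
   Context: $S_n$ acts by $\sigma e_i=e_{\sigma(i)}$; $V^g$ is the fixed space of $g$; $\delta_y(v)=1$ if $v\in V^y$ and $0$ otherwise. $\kappa^L_{\mathrm{tri}}=\sum\kappa^L_{(ijk)}(ijk)$ is the linear 2-cochain supported on 3-cycles with $\kappa^L_{(ijk)}(e_i,e_j)=\kappa^L_{(ijk)}(e_j,e_k)=\kappa^L_{(ijk)}(e_k,e_i)=a(e_i+e_j+e_k)+b\sum_{l\notin\{i,j,k\}}e_l$ and $\kappa^L_{(ijk)}(e_l,e_m)=0$ whenever $e_l$ or $e_m$ lies in $V^{(ijk)}$; $\kappa^C_{\mathrm{tri}}$ is the constant 2-cochain supported on 3-cycles with $\kappa^C_{(ijk)}(e_i,e_j)=\kappa^C_{(ijk)}(e_j,e_k)=\kappa^C_{(ijk)}(e_k,e_i)=c$ and $\kappa^C_{(ijk)}(e_l,e_m)=0$ whenever $e_l$ or $e_m$ lies in $V^{(ijk)}$. For $\alpha$ linear or constant and $\beta$ linear, $\phi(\alpha,\beta)_g=\sum_{xy=g}\phi_{x,y}$ with $\phi_{x,y}(v_1,v_2,v_3)=\alpha_x(v_1+yv_1,\beta_y(v_2,v_3))+\alpha_x(v_2+yv_2,\beta_y(v_3,v_1))+\alpha_x(v_3+yv_3,\beta_y(v_1,v_2))$; here $\phi^*_{x,y}$ is this with $\alpha=\kappa^*_{\mathrm{tri}}$, $\beta=\kappa^L_{\mathrm{tri}}$. *)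

theory Defs
  imports "HOL-Analysis.Analysis"
begin

text \<open>V = complex^'n with standard basis e_i; S_n = permutations of the finite index type 'n.\<close>

type_synonym 'n vec = "complex ^ 'n"

definition e :: "'n::finite \<Rightarrow> 'n vec" where
  "e i = axis i 1"

text \<open>Permutation action: sigma e_i = e_(sigma i).\<close>
definition act :: "('n::finite \<Rightarrow> 'n) \<Rightarrow> 'n vec \<Rightarrow> 'n vec" where
  "act \<sigma> v = (\<chi> l. v $ (inv \<sigma> l))"

definition fixsp :: "('n::finite \<Rightarrow> 'n) \<Rightarrow> 'n vec set" where
  "fixsp g = {v. act g v = v}"

definition delta :: "('n::finite \<Rightarrow> 'n) \<Rightarrow> 'n vec \<Rightarrow> complex" where
  "delta y v = (if v \<in> fixsp y then 1 else 0)"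

definition three_cycle :: "('n \<Rightarrow> 'n) \<Rightarrow> bool" where
  "three_cycle \<sigma> \<longleftrightarrow> (\<exists>i j k. distinct [i, j, k] \<and> \<sigma> i = j \<and> \<sigma> j = k \<and> \<sigma> k = i \<and>
       (\<forall>l. l \<notin> {i, j, k} \<longrightarrow> \<sigma> l = l))"

definition kappaL_basis :: "complex \<Rightarrow> complex \<Rightarrow> ('n::finite \<Rightarrow> 'n) \<Rightarrow> 'n \<Rightarrow> 'n \<Rightarrow> 'n vec" where
  "kappaL_basis a b x p q =
     (let A = (\<chi> l. if x l \<noteq> l then a else b) in
      if x p \<noteq> p \<and> x p = q then A
      else if x q \<noteq> q \<and> x q = p then - A
      else 0)"

definition kappaC_basis :: "complex \<Rightarrow> ('n::finite \<Rightarrow> 'n) \<Rightarrow> 'n \<Rightarrow> 'n \<Rightarrow> complex" where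
  "kappaC_basis c x p q =
     (if x p \<noteq> p \<and> x p = q then c
      else if x q \<noteq> q \<and> x q = p then - c
      else 0)"

definition kappaL :: "complex \<Rightarrow> complex \<Rightarrow> ('n::finite \<Rightarrow> 'n) \<Rightarrow> 'n vec \<Rightarrow> 'n vec \<Rightarrow> 'n vec" where
  "kappaL a b x u w =
     (if three_cycle x then (\<Sum>p\<in>UNIV. \<Sum>q\<in>UNIV. (u $ p * w $ q) *s kappaL_basis a b x p q) else 0)"

definition kappaC :: "complex \<Rightarrow> ('n::finite \<Rightarrow> 'n) \<Rightarrow> 'n vec \<Rightarrow> 'n vec \<Rightarrow> complex" where
  "kappaC c x u w =
     (if three_cycle x then (\<Sum>p\<in>UNIV. \<Sum>q\<in>UNIV. u $ p * w $ q * kappaC_basis c x p q) else 0)"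

definition phi_xy :: "(('n::finite \<Rightarrow> 'n) \<Rightarrow> 'n vec \<Rightarrow> 'n vec \<Rightarrow> 'b::plus)
     \<Rightarrow> (('n \<Rightarrow> 'n) \<Rightarrow> 'n vec \<Rightarrow> 'n vec \<Rightarrow> 'n vec)
     \<Rightarrow> ('n \<Rightarrow> 'n) \<Rightarrow> ('n \<Rightarrow> 'n) \<Rightarrow> 'n vec \<Rightarrow> 'n vec \<Rightarrow> 'n vec \<Rightarrow> 'b" where
  "phi_xy \<alpha> \<beta> x y v1 v2 v3 =
      \<alpha> x (v1 + act y v1) (\<beta> y v2 v3)
    + \<alpha> x (v2 + act y v2) (\<beta> y v3 v1)
    + \<alpha> x (v3 + act y v3) (\<beta> y v1 v2)"

end

theory Submission imports Defs begin

text \<open>Both \<open>\<kappa>\<^sup>L\<close> and \<open>\<kappa>\<^sup>C\<close> are multiples of the form \<open>kappaC 1\<close>, so every \<open>\<phi>\<^sup>*\<^sub>x\<^sub>,\<^sub>y\<close>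
  is a multiple of one scalar trilinear expression \<open>phi_coeff\<close>. On basis vectors
  \<open>kappaC 1 x (e p) w = w (x p) - w (x\<^sup>-\<^sup>1 p)\<close>, while \<open>kappaC 1 y (e q) (e r)\<close> vanishes unless \<open>q\<close>
  and \<open>r\<close> are moved by \<open>y\<close>. This kills every term in (1) and (2) and leaves
  \<open>2 (w (x i) - w (x\<^sup>-\<^sup>1 i))\<close> in (3), with \<open>w\<close> the weight vector of \<open>y\<close>. In (4) the three terms add up to
  twice the sum of \<open>w (x p) - w (x\<^sup>-\<^sup>1 p)\<close> over the support \<open>M\<close> of \<open>y\<close>, which vanishes because
  \<open>x\<close> maps \<open>{p \<in> M. x p \<in> M}\<close> bijectively onto \<open>{q \<in> M. x\<^sup>-\<^sup>1 q \<in> M}\<close>.\<close>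

lemma three_cycleE:
  assumes "three_cycle x"
  obtains i j k where "distinct [i, j, k]" "x i = j" "x j = k" "x k = i"
    "\<And>l. l \<notin> {i, j, k} \<Longrightarrow> x l = l"
  using assms unfolding three_cycle_def by blast

lemma three_cycle_moved_set:
  assumes "three_cycle x" "x p \<noteq> p"
  shows "{q. x q \<noteq> q} = {p, x p, x (x p)}" "distinct [p, x p, x (x p)]" "x (x (x p)) = p"
proof -
  obtain i j k where cyc: "distinct [i, j, k]" "x i = j" "x j = k" "x k = i"
    and fixed: "\<And>l. l \<notin> {i, j, k} \<Longrightarrow> x l = l"
    using three_cycleE[OF assms(1)] by blast
  have moved: "{q. x q \<noteq> q} = {i, j, k}"
  proof (rule set_eqI)
    show "q \<in> {q. x q \<noteq> q} \<longleftrightarrow> q \<in> {i, j, k}" for q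
      using cyc fixed[of q] by auto
  qed
  have "p = i \<or> p = j \<or> p = k"
    using fixed[of p] assms(2) by blast
  then have "{i, j, k} = {p, x p, x (x p)} \<and> distinct [p, x p, x (x p)] \<and> x (x (x p)) = p"
    using cyc by (elim disjE) auto
  then show "{q. x q \<noteq> q} = {p, x p, x (x p)}" "distinct [p, x p, x (x p)]" "x (x (x p)) = p"
    by (simp_all add: moved)
qed

lemma three_cycle_cube:
  assumes "three_cycle x"
  shows "x (x (x p)) = p"
  using three_cycle_moved_set(3)[OF assms] by (cases "x p = p") simp_all

lemma three_cycle_bij:
  assumes "three_cycle x"
  shows "bij x"
  by (rule o_bij[of "x \<circ> x"]) (simp_all add: fun_eq_iff three_cycle_cube[OF assms])

lemma three_cycle_apply_neq_inv:
  assumes "three_cycle x" "x p \<noteq> p"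
  shows "x p \<noteq> inv x p"
  using three_cycle_moved_set(2)[OF assms] bij_inv_eq_iff[OF three_cycle_bij[OF assms(1)]]
  by (metis distinct_length_2_or_more)

lemma e_nth: "e i $ l = of_bool (l = i)"
  by (simp add: e_def axis_def)

lemma e_eq_iff: "e i = e j \<longleftrightarrow> i = j"
  by (auto simp: e_def axis_eq_axis)

lemma act_basis:
  assumes "bij \<sigma>"
  shows "act \<sigma> (e i) = e (\<sigma> i)"
proof -
  have "inv \<sigma> l = i \<longleftrightarrow> l = \<sigma> i" for l
    by (metis bij_inv_eq_iff assms)
  then show ?thesis
    unfolding act_def by (simp add: vec_eq_iff e_nth)
qed

lemma basis_in_fixsp_iff:
  assumes "bij \<sigma>"
  shows "e i \<in> fixsp \<sigma> \<longleftrightarrow> \<sigma> i = i"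
  by (simp add: fixsp_def act_basis[OF assms] e_eq_iff)

lemma delta_basis:
  assumes "bij \<sigma>"
  shows "delta \<sigma> (e i) = of_bool (\<sigma> i = i)"
  by (simp add: delta_def basis_in_fixsp_iff[OF assms])

text \<open>For \<open>x = (i j k)\<close> this is the coefficient vector \<open>a (e i + e j + e k) + b \<Sum>{e l | l. l \<notin> {i, j, k}}\<close> of \<open>\<kappa>\<^sup>L\<close>.\<close>
definition tri_weight :: "complex \<Rightarrow> complex \<Rightarrow> ('n::finite \<Rightarrow> 'n) \<Rightarrow> 'n vec" where
  "tri_weight a b x = (\<chi> l. if x l \<noteq> l then a else b)"

lemma kappaC_basis_one:
  assumes "three_cycle x"
  shows "kappaC_basis 1 x p q = of_bool (q = x p) - of_bool (q = inv x p)"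
proof -
  have "x q = p \<longleftrightarrow> q = inv x p"
    by (metis bij_inv_eq_iff three_cycle_bij[OF assms])
  then show ?thesis
    using three_cycle_apply_neq_inv[OF assms, of p] unfolding kappaC_basis_def
    by (cases "x p = p") auto
qed

lemma kappaC_basis_one_fixed:
  assumes "three_cycle x" "x p = p \<or> x q = q"
  shows "kappaC_basis 1 x p q = 0"
  using assms(2) bij_inv_eq_iff[OF three_cycle_bij[OF assms(1)]]
    bij_is_inj[OF three_cycle_bij[OF assms(1)]]
  by (auto simp: kappaC_basis_one[OF assms(1)] dest: injD)

lemma kappaC_basis_one_step:
  assumes "three_cycle x" "x p \<noteq> p"
  shows "kappaC_basis 1 x p (x p) = 1"
  using three_cycle_apply_neq_inv[OF assms] by (simp add: kappaC_basis_one[OF assms(1)])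

lemma kappaC_scale: "kappaC c x u w = c * kappaC 1 x u w"
  unfolding kappaC_def kappaC_basis_def by (auto simp: sum_distrib_left intro!: sum.cong)

lemma kappaL_eq: "kappaL a b x u w = kappaC 1 x u w *s tri_weight a b x"
  unfolding kappaL_def kappaC_def kappaL_basis_def kappaC_basis_def tri_weight_def Let_def
  by (auto simp: vec_eq_iff sum_distrib_right intro!: sum.cong)

lemma kappaC_scaleR_right: "kappaC 1 x u (t *s w) = t * kappaC 1 x u w"
  unfolding kappaC_def by (auto simp: sum_distrib_left mult_ac intro!: sum.cong)

lemma kappaC_add_left: "kappaC 1 x (u + v) w = kappaC 1 x u w + kappaC 1 x v w"
  unfolding kappaC_def by (auto simp: sum.distrib algebra_simps)

lemma kappaC_basis_left:
  assumes "three_cycle x"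
  shows "kappaC 1 x (e p) w = w $ x p - w $ inv x p"
proof -
  have "kappaC 1 x (e p) w = (\<Sum>q\<in>UNIV. w $ q * kappaC_basis 1 x p q)"
    using assms unfolding kappaC_def e_nth
    by (simp add: mult.assoc sum_distrib_left[symmetric])
  also have "\<dots> = w $ x p - w $ inv x p"
    by (simp add: kappaC_basis_one[OF assms] right_diff_distrib sum_subtractf)
  finally show ?thesis .
qed

lemma kappaC_basis_basis:
  assumes "three_cycle x"
  shows "kappaC 1 x (e p) (e q) = kappaC_basis 1 x p q"
  by (simp add: kappaC_basis_left[OF assms] kappaC_basis_one[OF assms] e_nth eq_commute)

lemma sum_if_eq_card:
  fixes a b :: "'a::comm_ring_1"
  assumes "finite C"
  shows "(\<Sum>p\<in>C. if P p then a else b) = of_nat (card C) * b + (a - b) * of_nat (card {p\<in>C. P p})"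
proof -
  have "(\<Sum>p\<in>C. if P p then a else b) = (\<Sum>p\<in>C. b + (a - b) * of_bool (P p))"
    by (intro sum.cong) auto
  also have "\<dots> = of_nat (card C) * b + (a - b) * (\<Sum>p\<in>C. of_bool (P p))"
    by (simp only: sum.distrib sum_distrib_left[symmetric] sum_constant mult_of_nat_commute)
  finally show ?thesis
    using assms by (simp add: Int_def)
qed

lemma sum_weight_comp_eq_comp_inv:
  fixes a b :: "'a::comm_ring_1"
  assumes "bij \<sigma>" "finite C"
  shows "(\<Sum>p\<in>C. if \<sigma> p \<in> C then a else b) = (\<Sum>p\<in>C. if inv \<sigma> p \<in> C then a else b)"
proof -
  have "bij_betw \<sigma> {p\<in>C. \<sigma> p \<in> C} {q\<in>C. inv \<sigma> q \<in> C}"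
    by (rule bij_betw_byWitness[where f' = "inv \<sigma>"])
      (auto simp: inv_f_f[OF bij_is_inj[OF assms(1)]] surj_f_inv_f[OF bij_is_surj[OF assms(1)]])
  then have "card {p\<in>C. \<sigma> p \<in> C} = card {q\<in>C. inv \<sigma> q \<in> C}"
    by (rule bij_betw_same_card)
  then show ?thesis
    by (simp add: sum_if_eq_card[OF assms(2)])
qed

definition phi_coeff ::
    "complex \<Rightarrow> complex \<Rightarrow> ('n::finite \<Rightarrow> 'n) \<Rightarrow> ('n \<Rightarrow> 'n) \<Rightarrow> 'n vec \<Rightarrow> 'n vec \<Rightarrow> 'n vec \<Rightarrow> complex"
  where
  "phi_coeff a b x y v1 v2 v3 =
      kappaC 1 y v2 v3 * kappaC 1 x (v1 + act y v1) (tri_weight a b y)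
    + kappaC 1 y v3 v1 * kappaC 1 x (v2 + act y v2) (tri_weight a b y)
    + kappaC 1 y v1 v2 * kappaC 1 x (v3 + act y v3) (tri_weight a b y)"

lemma phi_xy_kappaL:
  "phi_xy (kappaL a b) (kappaL a b) x y v1 v2 v3 = phi_coeff a b x y v1 v2 v3 *s tri_weight a b x"
  unfolding phi_xy_def phi_coeff_def kappaL_eq kappaC_scaleR_right
  by (simp add: vector_sadd_rdistrib)

lemma phi_xy_kappaC:
  "phi_xy (kappaC c) (kappaL a b) x y v1 v2 v3 = c * phi_coeff a b x y v1 v2 v3"
  unfolding phi_xy_def phi_coeff_def kappaL_eq kappaC_scaleR_right kappaC_scale[of c]
  by (simp add: algebra_simps)

lemma phi_coeff_basis:
  fixes a b :: complex
  assumes "three_cycle x" "three_cycle y"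
  defines "R \<equiv> \<lambda>p. kappaC 1 x (e p) (tri_weight a b y)"
  shows "phi_coeff a b x y (e p) (e q) (e r) =
      kappaC_basis 1 y q r * (R p + R (y p))
    + kappaC_basis 1 y r p * (R q + R (y q))
    + kappaC_basis 1 y p q * (R r + R (y r))"
  unfolding phi_coeff_def R_def
  by (simp add: act_basis[OF three_cycle_bij[OF assms(2)]] kappaC_basis_basis[OF assms(2)]
      kappaC_add_left)

lemma phi_coeff_fixed_fixed:
  assumes "three_cycle x" "three_cycle y" "y p = p" "y q = q"
  shows "phi_coeff a b x y (e p) (e q) (e r) = 0"
  using assms by (simp add: phi_coeff_basis kappaC_basis_one_fixed)

lemma phi_coeff_fixed_by_both:
  assumes "three_cycle x" "three_cycle y" "y p = p" "x p = p"
  shows "phi_coeff a b x y (e p) (e q) (e r) = 0"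
proof -
  have "inv x p = p"
    using assms(4) by (metis bij_inv_eq_iff three_cycle_bij[OF assms(1)])
  then show ?thesis
    using assms by (simp add: phi_coeff_basis kappaC_basis_one_fixed kappaC_basis_left)
qed

lemma phi_coeff_fixed_step:
  assumes "three_cycle x" "three_cycle y" "y p = p" "y q \<noteq> q"
  shows "phi_coeff a b x y (e p) (e q) (e (y q)) =
    2 * (b - a) * (of_bool (y (x p) = x p) - of_bool (y (inv x p) = inv x p))"
proof -
  have "y (y q) \<noteq> y q"
    using assms(4) by (metis bij_pointE three_cycle_bij[OF assms(2)])
  then have "phi_coeff a b x y (e p) (e q) (e (y q)) = 2 * kappaC 1 x (e p) (tri_weight a b y)"
    using assms by (simp add: phi_coeff_basis kappaC_basis_one_fixed kappaC_basis_one_step)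
  also have "kappaC 1 x (e p) (tri_weight a b y) =
      (b - a) * (of_bool (y (x p) = x p) - of_bool (y (inv x p) = inv x p))"
    by (auto simp: kappaC_basis_left[OF assms(1)] tri_weight_def)
  finally show ?thesis
    by (simp only: mult.assoc)
qed

lemma phi_coeff_orbit:
  assumes "three_cycle x" "three_cycle y" "y p \<noteq> p"
  shows "phi_coeff a b x y (e p) (e (y p)) (e (y (y p))) = 0"
proof -
  define M where "M = {q. y q \<noteq> q}"
  define R where "R q = kappaC 1 x (e q) (tri_weight a b y)" for q
  note orbit = three_cycle_moved_set[OF assms(2,3)]
  have steps: "kappaC_basis 1 y p (y p) = 1" "kappaC_basis 1 y (y p) (y (y p)) = 1"
    "kappaC_basis 1 y (y (y p)) p = 1"
    using kappaC_basis_one_step[OF assms(2)] orbit(2,3) by (metis distinct_length_2_or_more)+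
  have "phi_coeff a b x y (e p) (e (y p)) (e (y (y p))) = 2 * (\<Sum>q\<in>{p, y p, y (y p)}. R q)"
    using orbit(2) by (simp add: phi_coeff_basis[OF assms(1,2)] steps orbit(3) R_def)
  also have "(\<Sum>q\<in>{p, y p, y (y p)}. R q) = (\<Sum>q\<in>M. R q)"
    by (simp only: M_def orbit(1))
  also have "\<dots> = (\<Sum>q\<in>M. if x q \<in> M then a else b) - (\<Sum>q\<in>M. if inv x q \<in> M then a else b)"
    by (simp add: R_def M_def kappaC_basis_left[OF assms(1)] tri_weight_def sum_subtractf)
  also have "\<dots> = 0"
    by (simp add: sum_weight_comp_eq_comp_inv[OF three_cycle_bij[OF assms(1)]])
  finally show ?thesis by simp
qed

theorem lemma7p1:
  fixes a b c :: complex and x y :: "'n::finite \<Rightarrow> 'n" and i j k :: 'n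
  assumes "CARD('n) \<ge> 3"
    and "three_cycle x" and "three_cycle y"
  defines "phiL \<equiv> phi_xy (kappaL a b) (kappaL a b) x y"
    and "phiC \<equiv> phi_xy (kappaC c) (kappaL a b) x y"
  shows
   "(e i \<in> fixsp y \<and> e j \<in> fixsp y \<longrightarrow>
        phiL (e i) (e j) (e k) = 0 \<and> phiC (e i) (e j) (e k) = 0)
  \<and> (e i \<in> fixsp y \<inter> fixsp x \<longrightarrow>
        phiL (e i) (e j) (e k) = 0 \<and> phiC (e i) (e j) (e k) = 0)
  \<and> (e i \<in> fixsp y - fixsp x \<and> e j \<notin> fixsp y \<longrightarrow>
        phiL (e i) (e j) (act y (e j)) =
          (2 * (b - a) * (delta y (act x (e i)) - delta y (act (inv x) (e i))))
            *s kappaL a b x (e i) (act x (e i))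
      \<and> phiC (e i) (e j) (act y (e j)) =
          2 * (b - a) * (delta y (act x (e i)) - delta y (act (inv x) (e i)))
            * kappaC c x (e i) (act x (e i)))
  \<and> (e i \<notin> fixsp y \<longrightarrow>
        phiL (e i) (act y (e i)) (act y (act y (e i))) = 0
      \<and> phiC (e i) (act y (e i)) (act y (act y (e i))) = 0)"
proof -
  \<comment> \<open>The bound on \<open>CARD('n)\<close> is implied by \<open>three_cycle x\<close> and not needed.\<close>
  have bij: "bij x" "bij y" "bij (inv x)"
    using three_cycle_bij assms(2,3) bij_imp_bij_inv by blast+
  note basis = act_basis[OF bij(1)] act_basis[OF bij(2)] act_basis[OF bij(3)]
    basis_in_fixsp_iff[OF bij(1)] basis_in_fixsp_iff[OF bij(2)] delta_basis[OF bij(2)]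
  have phi: "phiL u v w = phi_coeff a b x y u v w *s tri_weight a b x"
    "phiC u v w = c * phi_coeff a b x y u v w" for u v w
    unfolding phiL_def phiC_def by (rule phi_xy_kappaL phi_xy_kappaC)+
  have step: "kappaC 1 x (e i) (e (x i)) = 1" if "x i \<noteq> i"
    using that by (simp add: kappaC_basis_basis[OF assms(2)] kappaC_basis_one_step[OF assms(2)])
  show ?thesis
    using phi_coeff_fixed_fixed[OF assms(2,3)] phi_coeff_fixed_by_both[OF assms(2,3)]
      phi_coeff_fixed_step[OF assms(2,3)] phi_coeff_orbit[OF assms(2,3)] step
    by (simp add: phi basis kappaL_eq kappaC_scale[of c])
qed

end
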